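(* Let $d$ be an integer and let $b,\alpha,\beta\in\mathbb{Z}_{\ge0}^n$ satisfy $\alpha_1\le\cdots\le\alpha_n=d$, $\beta_1\le\cdots\le\beta_n=d$, $\alpha_i\le\beta_i$ for all $i$, $\alpha_1=0$ and $\beta_1=b_1$. Let $I\subseteq S=K[x_1,\ldots,x_n]$ be the ideal generated by all monomials $x^u$ with $u\in\mathbb{Z}_{\ge0}^n$, $0\le u_i\le b_i$ and $\alpha_i\le u_1+\cdots+u_i\le\beta_i$ for $i=1,\ldots,n$. Then $\mathrm{depth}(S/I)=0$ if and only if all of the following hold: (i) $b_i\ge1$ for all $i=1,\ldots,n$; (ii) $\alpha_i\le\beta_i-1$ for $i=2,\ldots,n-1$; (iii) $\beta_i+b_{i+1}+\cdots+b_j\ge\alpha_j+j-i+1$ for all $1\le i\le j\le n-1$; (iv) $\beta_i+b_{i+1}+\cdots+b_n\ge d+n-i$ for all $1\le i\le n$.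
   Context: $K$ is a field. $I$ is a polymatroidal ideal (a basic PLP-polymatroidal ideal of type $(\mathbf{0},b\mid\alpha,\beta)$), generated in degree $d$. *)

theory Defs
  imports Main "HOL-Library.Poly_Mapping"
begin

text \<open>Polynomials over a field 'k in variables x_i (i :: nat): a monomial x^u is an
  finitely supported exponent vector u; a polynomial maps monomials to coefficients.\<close>
type_synonym 'k mpoly = "(nat \<Rightarrow>\<^sub>0 nat) \<Rightarrow>\<^sub>0 'k"

definition polyring :: "nat \<Rightarrow> 'k::field mpoly set" where
  "polyring n = {p. \<forall>m\<in>Poly_Mapping.keys p. Poly_Mapping.keys m \<subseteq> {1..n}}"

definition monom :: "(nat \<Rightarrow>\<^sub>0 nat) \<Rightarrow> 'k::field mpoly" where
  "monom u = Poly_Mapping.single u 1"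

inductive_set ideal_gen :: "nat \<Rightarrow> 'k::field mpoly set \<Rightarrow> 'k mpoly set"
  for n :: nat and G :: "'k mpoly set" where
  zero: "0 \<in> ideal_gen n G"
| step: "\<lbrakk>g \<in> G; q \<in> polyring n; p \<in> ideal_gen n G\<rbrakk> \<Longrightarrow> q * g + p \<in> ideal_gen n G"

definition max_ideal :: "nat \<Rightarrow> 'k::field mpoly set" where
  "max_ideal n = {p \<in> polyring n. Poly_Mapping.lookup p 0 = 0}"

text \<open>depth(S/I) = 0: S/I is nonzero and m contains no S/I-regular element,
  i.e. every element of m is a zero divisor on S/I.\<close>
definition depth_zero :: "nat \<Rightarrow> 'k::field mpoly set \<Rightarrow> bool" where
  "depth_zero n I \<longleftrightarrow> (1::'k mpoly) \<notin> I \<and>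
     (\<forall>f\<in>max_ideal n. \<exists>g\<in>polyring n. g \<notin> I \<and> f * g \<in> I)"

definition plp_ideal :: "nat \<Rightarrow> (nat \<Rightarrow> nat) \<Rightarrow> (nat \<Rightarrow> nat) \<Rightarrow> (nat \<Rightarrow> nat) \<Rightarrow> 'k::field mpoly set" where
  "plp_ideal n b \<alpha> \<beta> = ideal_gen n
     {monom u | u. Poly_Mapping.keys u \<subseteq> {1..n} \<and>
        (\<forall>i\<in>{1..n}. Poly_Mapping.lookup u i \<le> b i \<and>
           \<alpha> i \<le> (\<Sum>k=1..i. Poly_Mapping.lookup u k) \<and>
           (\<Sum>k=1..i. Poly_Mapping.lookup u k) \<le> \<beta> i)}"

end

theory Submission
  imports Defs
begin

text \<open>
  For a monomial ideal I = (x^u | u in A), depth S/I = 0 iff S/I has a socle monomial: some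
  x^w not in I with x_i x^w in I for all i. Such an x^w is annihilated by the whole maximal
  ideal. Conversely, if g is not in I but (x_1 + ... + x_n) g is, then either every x_i g lies
  in I, and each monomial of g outside I is a socle monomial, or some x_i g outside I has fewer
  monomials outside I than g, and we iterate.

  For the PLP-polymatroidal ideal, x^w is a socle monomial iff w_l < b_l for all l,
  alpha_i <= w_1 + ... + w_i < beta_i for i < n, and |w| = d - 1. Both directions rest on one
  construction: if alpha_i is bounded by c_1 + ... + c_i and by every beta_k + c_(k+1) + ... + c_i,
  then the greedy partial sums S_i = min beta_i (S_(i-1) + c_i) define an exponent below c whose
  partial sums lie between alpha and beta. Conditions (i)-(iv) say exactly that this construction
  succeeds for c = b - 1, the bounds beta_i - 1 (i < n) and total degree d - 1.
\<close>

section \<open>Monomial ideals\<close>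

definition upset :: "(nat \<Rightarrow>\<^sub>0 nat) set \<Rightarrow> (nat \<Rightarrow>\<^sub>0 nat) set" where
  "upset A = {m. \<exists>u\<in>A. Poly_Mapping.lookup u \<le> Poly_Mapping.lookup m}"

lemma upset_mono:
  "m \<in> upset A \<Longrightarrow> Poly_Mapping.lookup m \<le> Poly_Mapping.lookup m' \<Longrightarrow> m' \<in> upset A"
  unfolding upset_def using order_trans by blast

lemma upset_add: "m \<in> upset A \<Longrightarrow> a + m \<in> upset A"
  by (erule upset_mono) (simp add: le_fun_def lookup_add)

lemma polyring_single: "Poly_Mapping.keys m \<subseteq> {1..n} \<Longrightarrow> Poly_Mapping.single m c \<in> polyring n"
  unfolding polyring_def by auto

lemma polyring_add: "p \<in> polyring n \<Longrightarrow> q \<in> polyring n \<Longrightarrow> p + q \<in> polyring n"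
  using keys_add[of p q] unfolding polyring_def by blast

lemma polyring_mult:
  assumes "p \<in> polyring n" "q \<in> polyring n"
  shows "p * q \<in> polyring n"
  unfolding polyring_def mem_Collect_eq
proof
  fix m assume "m \<in> Poly_Mapping.keys (p * q)"
  then obtain a c where "m = a + c" "a \<in> Poly_Mapping.keys p" "c \<in> Poly_Mapping.keys q"
    using keys_mult by blast
  then show "Poly_Mapping.keys m \<subseteq> {1..n}"
    using assms keys_add[of a c] unfolding polyring_def by blast
qed

lemma ideal_gen_add: "p \<in> ideal_gen n G \<Longrightarrow> q \<in> ideal_gen n G \<Longrightarrow> p + q \<in> ideal_gen n G"
proof (induction p rule: ideal_gen.induct)
  case zero
  then show ?case by simp
next
  case (step g r p)
  then have "r * g + (p + q) \<in> ideal_gen n G" by (intro ideal_gen.step) auto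
  then show ?case by (simp add: add.assoc)
qed

lemma ideal_gen_sum:
  "finite S \<Longrightarrow> (\<And>x. x \<in> S \<Longrightarrow> h x \<in> ideal_gen n G) \<Longrightarrow> sum h S \<in> ideal_gen n G"
  by (induction S rule: finite_induct) (auto intro: ideal_gen_add ideal_gen.zero)

lemma sum_single_lookup:
  "(\<Sum>m\<in>Poly_Mapping.keys p. Poly_Mapping.single m (Poly_Mapping.lookup p m)) = p"
  by (rule poly_mapping_eqI) (simp add: lookup_sum lookup_single when_def in_keys_iff)

lemma lookup_monom_mult:
  "Poly_Mapping.lookup (monom a * g) (a + m) = Poly_Mapping.lookup (g :: 'k::field mpoly) m"
  by (simp add: monom_def lookup_mult lookup_single when_mult)

lemma keys_monom_mult:
  "Poly_Mapping.keys (monom a * g) = (+) a ` Poly_Mapping.keys (g :: 'k::field mpoly)"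
proof
  show "Poly_Mapping.keys (monom a * g) \<subseteq> (+) a ` Poly_Mapping.keys g"
    using keys_mult[of "monom a" g] by (auto simp: monom_def)
  show "(+) a ` Poly_Mapping.keys g \<subseteq> Poly_Mapping.keys (monom a * g)"
    by (auto simp: in_keys_iff lookup_monom_mult)
qed

lemma ideal_gen_monomD:
  assumes A: "\<And>u. u \<in> A \<Longrightarrow> Poly_Mapping.keys u \<subseteq> {1..n}"
    and "p \<in> ideal_gen n (monom ` A :: 'k::field mpoly set)"
  shows "p \<in> polyring n \<and> Poly_Mapping.keys p \<subseteq> upset A"
  using assms(2)
proof (induction p rule: ideal_gen.induct)
  case zero
  then show ?case by (simp add: polyring_def)
next
  case (step g q p)
  then obtain u where u: "u \<in> A" "g = monom u" by blast
  then have "u \<in> upset A" unfolding upset_def by blast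
  then have "Poly_Mapping.keys (q * g) \<subseteq> upset A"
    using keys_mult[of q g] u(2) by (auto simp: monom_def intro: upset_add)
  moreover have "q * g \<in> polyring n"
    using step.hyps(2) A[OF u(1)] u(2) by (simp add: monom_def polyring_mult polyring_single)
  ultimately show ?case using step.IH keys_add[of "q * g" p] polyring_add by blast
qed

lemma ideal_gen_monomI:
  assumes "p \<in> polyring n" "Poly_Mapping.keys p \<subseteq> upset A"
  shows "p \<in> ideal_gen n (monom ` A :: 'k::field mpoly set)"
proof -
  have "Poly_Mapping.single m (Poly_Mapping.lookup p m) \<in> ideal_gen n (monom ` A)"
    if m: "m \<in> Poly_Mapping.keys p" for m
  proof -
    obtain u where u: "u \<in> A" "Poly_Mapping.lookup u \<le> Poly_Mapping.lookup m"
      using m assms(2) unfolding upset_def by blast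
    have m_eq: "m = (m - u) + u"
      using le_funD[OF u(2)] by (intro poly_mapping_eqI) (simp add: lookup_add lookup_minus)
    have "Poly_Mapping.keys m \<subseteq> {1..n}"
      using m assms(1) unfolding polyring_def by blast
    then have "Poly_Mapping.keys (m - u) \<subseteq> {1..n}"
      by (auto simp: in_keys_iff lookup_minus)
    then have "Poly_Mapping.single (m - u) (Poly_Mapping.lookup p m) * monom u + 0
        \<in> ideal_gen n (monom ` A)"
      using u(1) by (intro ideal_gen.step ideal_gen.zero polyring_single) auto
    then show ?thesis unfolding monom_def by (simp add: mult_single flip: m_eq)
  qed
  then have "(\<Sum>m\<in>Poly_Mapping.keys p. Poly_Mapping.single m (Poly_Mapping.lookup p m))
      \<in> ideal_gen n (monom ` A)"
    by (intro ideal_gen_sum) auto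
  then show ?thesis by (simp only: sum_single_lookup)
qed

lemma ideal_gen_monom_iff:
  assumes "\<And>u. u \<in> A \<Longrightarrow> Poly_Mapping.keys u \<subseteq> {1..n}"
  shows "p \<in> ideal_gen n (monom ` A :: 'k::field mpoly set) \<longleftrightarrow>
    p \<in> polyring n \<and> Poly_Mapping.keys p \<subseteq> upset A"
  using ideal_gen_monomD[OF assms] ideal_gen_monomI by blast

definition socle_exp :: "nat \<Rightarrow> (nat \<Rightarrow>\<^sub>0 nat) set \<Rightarrow> (nat \<Rightarrow>\<^sub>0 nat) \<Rightarrow> bool" where
  "socle_exp n A w \<longleftrightarrow> Poly_Mapping.keys w \<subseteq> {1..n} \<and> w \<notin> upset A \<and>
     (\<forall>i\<in>{1..n}. Poly_Mapping.single i 1 + w \<in> upset A)"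

text \<open>The coefficient of x_i x^ws in (x_1 + ... + x_n) g is that of x^ws in g: any other
  contribution x_j x^m would come from a monomial x^m outside I of larger x_i-degree.\<close>

lemma shift_of_max_key_outside_upset:
  fixes g :: "'k::field mpoly"
  assumes annihilated:
      "Poly_Mapping.keys ((\<Sum>j\<in>{1..n}. monom (Poly_Mapping.single j 1)) * g) \<subseteq> upset A"
    and i: "i \<in> {1..n}"
    and ws: "ws \<in> Poly_Mapping.keys g - upset A"
    and ws_max: "\<And>m. m \<in> Poly_Mapping.keys g - upset A \<Longrightarrow>
      Poly_Mapping.lookup m i \<le> Poly_Mapping.lookup ws i"
  shows "Poly_Mapping.single i 1 + ws \<in> upset A"
proof (rule ccontr)
  let ?x = "\<lambda>j. monom (Poly_Mapping.single j 1) :: 'k mpoly"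
  let ?t = "Poly_Mapping.single i 1 + ws"
  assume bad: "?t \<notin> upset A"
  have others_vanish: "Poly_Mapping.lookup (?x j * g) ?t = 0" if "j \<noteq> i" for j
  proof (rule ccontr)
    assume "Poly_Mapping.lookup (?x j * g) ?t \<noteq> 0"
    then obtain m where m: "m \<in> Poly_Mapping.keys g" "?t = Poly_Mapping.single j 1 + m"
      by (auto simp flip: in_keys_iff simp: keys_monom_mult)
    then have "m \<notin> upset A" using bad upset_add by metis
    moreover have "Poly_Mapping.lookup m i = Poly_Mapping.lookup ws i + 1"
      using arg_cong[OF m(2), of "\<lambda>x. Poly_Mapping.lookup x i"] \<open>j \<noteq> i\<close>
      by (simp add: lookup_add lookup_single)
    ultimately show False using ws_max[of m] m(1) by simp
  qed
  have "Poly_Mapping.lookup ((\<Sum>j\<in>{1..n}. ?x j) * g) ?t =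
      (\<Sum>j\<in>{1..n}. Poly_Mapping.lookup (?x j * g) ?t)"
    by (simp add: sum_distrib_right lookup_sum)
  also have "\<dots> = Poly_Mapping.lookup (?x i * g) ?t +
      (\<Sum>j\<in>{1..n} - {i}. Poly_Mapping.lookup (?x j * g) ?t)"
    using i by (simp add: sum.remove)
  also have "\<dots> = Poly_Mapping.lookup g ws"
    using others_vanish by (simp add: lookup_monom_mult)
  finally have "?t \<in> Poly_Mapping.keys ((\<Sum>j\<in>{1..n}. ?x j) * g)"
    using ws by (simp add: in_keys_iff)
  then show False using annihilated bad by blast
qed

lemma socle_exp_exists_if_annihilated:
  fixes g :: "'k::field mpoly"
  assumes "g \<in> polyring n" "\<not> Poly_Mapping.keys g \<subseteq> upset A"
    and "Poly_Mapping.keys ((\<Sum>i\<in>{1..n}. monom (Poly_Mapping.single i 1)) * g) \<subseteq> upset A"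
  shows "\<exists>w. socle_exp n A w"
  using assms
proof (induction "card (Poly_Mapping.keys g - upset A)" arbitrary: g rule: less_induct)
  case less
  let ?x = "\<lambda>j. monom (Poly_Mapping.single j 1) :: 'k mpoly"
  show ?case
  proof (cases "\<forall>i\<in>{1..n}. Poly_Mapping.keys (?x i * g) \<subseteq> upset A")
    case True
    obtain w where "w \<in> Poly_Mapping.keys g" "w \<notin> upset A" using less.prems(2) by blast
    then have "socle_exp n A w"
      using True less.prems(1) by (auto simp: socle_exp_def polyring_def keys_monom_mult)
    then show ?thesis ..
  next
    case False
    then obtain i where i: "i \<in> {1..n}" "\<not> Poly_Mapping.keys (?x i * g) \<subseteq> upset A" by blast
    define B where "B = Poly_Mapping.keys g - upset A"
    have B: "finite B" "B \<noteq> {}" using less.prems(2) by (auto simp: B_def)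
    define max_deg where "max_deg = Max ((\<lambda>m. Poly_Mapping.lookup m i) ` B)"
    have "max_deg \<in> (\<lambda>m. Poly_Mapping.lookup m i) ` B" using B unfolding max_deg_def by simp
    then obtain ws where ws: "ws \<in> B" "Poly_Mapping.lookup ws i = max_deg" by blast
    have "Poly_Mapping.lookup m i \<le> Poly_Mapping.lookup ws i" if "m \<in> B" for m
      using B that unfolding ws(2) max_deg_def by simp
    then have ws_shift: "Poly_Mapping.single i 1 + ws \<in> upset A"
      using shift_of_max_key_outside_upset[OF less.prems(3) i(1)] ws(1) unfolding B_def by blast
    have "Poly_Mapping.keys (?x i * g) - upset A \<subseteq> (+) (Poly_Mapping.single i 1) ` (B - {ws})"
      using ws_shift by (auto simp: keys_monom_mult B_def intro: upset_add)
    then have "card (Poly_Mapping.keys (?x i * g) - upset A) \<le> card (B - {ws})"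
      using B(1) by (meson card_image_le finite_Diff order_trans card_mono finite_imageI)
    also have "\<dots> < card B" using B(1) ws(1) by (meson card_Diff1_less)
    finally have fewer_bad: "card (Poly_Mapping.keys (?x i * g) - upset A) < card B" .
    have "(\<Sum>j\<in>{1..n}. ?x j) * (?x i * g) = ?x i * ((\<Sum>j\<in>{1..n}. ?x j) * g)"
      by (simp add: mult.left_commute)
    then have "Poly_Mapping.keys ((\<Sum>j\<in>{1..n}. ?x j) * (?x i * g)) =
        (+) (Poly_Mapping.single i 1) ` Poly_Mapping.keys ((\<Sum>j\<in>{1..n}. ?x j) * g)"
      by (simp only: keys_monom_mult)
    then have "Poly_Mapping.keys ((\<Sum>j\<in>{1..n}. ?x j) * (?x i * g)) \<subseteq> upset A"
      using less.prems(3) by (auto intro: upset_add)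
    moreover have "?x i * g \<in> polyring n"
      using i(1) less.prems(1) by (simp add: monom_def polyring_mult polyring_single)
    ultimately show ?thesis using less.hyps fewer_bad i(2) unfolding B_def by blast
  qed
qed

lemma sum_vars_in_max_ideal:
  "(\<Sum>i\<in>{1..n}. monom (Poly_Mapping.single i 1) :: 'k::field mpoly) \<in> max_ideal n"
proof -
  have nonzero: "Poly_Mapping.single i (Suc 0) \<noteq> 0" for i
    by (metis lookup_single_eq lookup_zero Suc_neq_Zero)
  have "Poly_Mapping.keys (\<Sum>i\<in>{1..n}. monom (Poly_Mapping.single i 1) :: 'k mpoly)
      \<subseteq> (\<Union>i\<in>{1..n}. {Poly_Mapping.single i 1})"
    using keys_sum[of "\<lambda>i. monom (Poly_Mapping.single i 1) :: 'k mpoly" "{1..n}"]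
    by (auto simp: monom_def)
  then show ?thesis
    by (auto simp: max_ideal_def polyring_def lookup_sum monom_def lookup_single when_def nonzero)
qed

lemma socle_exp_annihilated_by_max_ideal:
  assumes "socle_exp n A w" "f \<in> max_ideal n"
  shows "Poly_Mapping.keys (f * monom w) \<subseteq> upset A"
proof
  fix m assume "m \<in> Poly_Mapping.keys (f * monom w)"
  then obtain a where a: "a \<in> Poly_Mapping.keys f" "m = a + w"
    using keys_mult[of f "monom w"] by (auto simp: monom_def)
  have "a \<noteq> 0" using a(1) assms(2) by (auto simp: max_ideal_def in_keys_iff)
  then obtain i where i: "i \<in> Poly_Mapping.keys a" by fastforce
  then have "i \<in> {1..n}" using a(1) assms(2) unfolding max_ideal_def polyring_def by blast
  then have "Poly_Mapping.single i 1 + w \<in> upset A" using assms(1) by (simp add: socle_exp_def)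
  moreover have "Poly_Mapping.lookup (Poly_Mapping.single i 1 + w) \<le> Poly_Mapping.lookup m"
    using i by (auto simp: le_fun_def a(2) lookup_add lookup_single when_def in_keys_iff)
  ultimately show "m \<in> upset A" by (rule upset_mono)
qed

lemma depth_zero_ideal_gen_monom_iff:
  assumes A: "\<And>u. u \<in> A \<Longrightarrow> Poly_Mapping.keys u \<subseteq> {1..n}"
  shows "depth_zero n (ideal_gen n (monom ` A) :: 'k::field mpoly set) \<longleftrightarrow> (\<exists>w. socle_exp n A w)"
proof
  assume "depth_zero n (ideal_gen n (monom ` A) :: 'k mpoly set)"
  then obtain g :: "'k mpoly" where "g \<in> polyring n" "g \<notin> ideal_gen n (monom ` A)"
      "(\<Sum>i\<in>{1..n}. monom (Poly_Mapping.single i 1)) * g \<in> ideal_gen n (monom ` A)"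
    using sum_vars_in_max_ideal unfolding depth_zero_def by blast
  then show "\<exists>w. socle_exp n A w"
    by (intro socle_exp_exists_if_annihilated[of g]) (simp_all add: ideal_gen_monom_iff[OF A])
next
  assume "\<exists>w. socle_exp n A w"
  then obtain w where w: "socle_exp n A w" ..
  have "0 \<notin> upset A"
    using w upset_mono[of 0 A w] by (auto simp: socle_exp_def le_fun_def)
  then have "(1 :: 'k mpoly) \<notin> ideal_gen n (monom ` A)"
    by (simp add: ideal_gen_monom_iff[OF A])
  moreover have "monom w \<in> polyring n"
    using w by (simp add: socle_exp_def monom_def polyring_single)
  moreover have "monom w \<notin> ideal_gen n (monom ` A :: 'k mpoly set)"
  proof
    assume "monom w \<in> ideal_gen n (monom ` A :: 'k mpoly set)"
    then have "Poly_Mapping.keys (monom w :: 'k mpoly) \<subseteq> upset A"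
      using ideal_gen_monomD[OF A] by blast
    then show False using w by (simp add: socle_exp_def monom_def)
  qed
  moreover have "f * monom w \<in> ideal_gen n (monom ` A :: 'k mpoly set)" if "f \<in> max_ideal n" for f
  proof -
    have "f * monom w \<in> polyring n"
      using that \<open>monom w \<in> polyring n\<close> by (auto simp: max_ideal_def intro: polyring_mult)
    then show ?thesis
      using socle_exp_annihilated_by_max_ideal[OF w that] by (simp add: ideal_gen_monom_iff[OF A])
  qed
  ultimately show "depth_zero n (ideal_gen n (monom ` A) :: 'k mpoly set)"
    unfolding depth_zero_def by blast
qed

lemma socle_exp_witness:
  assumes "socle_exp n A w" "j \<in> {1..n}"
  obtains u where "u \<in> A"
    "Poly_Mapping.lookup u \<le> Poly_Mapping.lookup (Poly_Mapping.single j 1 + w)"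
    "Poly_Mapping.lookup u j = Poly_Mapping.lookup w j + 1"
proof -
  obtain u where u: "u \<in> A"
      "Poly_Mapping.lookup u \<le> Poly_Mapping.lookup (Poly_Mapping.single j 1 + w)"
    using assms unfolding socle_exp_def upset_def by blast
  have u_le: "Poly_Mapping.lookup u l \<le> Poly_Mapping.lookup w l + (if l = j then 1 else 0)" for l
    using le_funD[OF u(2), of l] by (auto simp: lookup_add lookup_single when_def)
  have "\<not> Poly_Mapping.lookup u \<le> Poly_Mapping.lookup w"
    using u(1) assms(1) unfolding socle_exp_def upset_def by blast
  then obtain l where "Poly_Mapping.lookup w l < Poly_Mapping.lookup u l"
    by (auto simp: le_fun_def not_le)
  with u_le[of l] have "Poly_Mapping.lookup u j = Poly_Mapping.lookup w j + 1"
    using u_le[of j] by (cases "l = j") auto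
  with u show ?thesis using that by blast
qed

section \<open>Exponent vectors with prescribed partial sums\<close>

abbreviation partial_sum :: "(nat \<Rightarrow>\<^sub>0 nat) \<Rightarrow> nat \<Rightarrow> nat" where
  "partial_sum u i \<equiv> \<Sum>k=1..i. Poly_Mapping.lookup u k"

lemma sum_atLeastAtMost_split:
  fixes a k i :: nat
  shows "a \<le> k + 1 \<Longrightarrow> k \<le> i \<Longrightarrow> sum f {a..i} = sum f {a..k} + sum f {k+1..i}"
proof -
  assume "a \<le> k + 1" "k \<le> i"
  then have "{a..i} = {a..k} \<union> {Suc k..i}" by auto
  then show ?thesis by (simp add: sum.union_disjoint)
qed

lemma sum_minus_one_add_card:
  "finite L \<Longrightarrow> (\<And>l. l \<in> L \<Longrightarrow> 1 \<le> f l) \<Longrightarrow> (\<Sum>l\<in>L. f l - 1) + card L = sum f L"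
proof (induction L rule: finite_induct)
  case (insert x F)
  then have "1 \<le> f x" "(\<Sum>l\<in>F. f l - 1) + card F = sum f F" by auto
  then show ?case using insert.hyps by simp
qed simp

lemma sum_lookup_le_add_single:
  fixes u w :: "nat \<Rightarrow>\<^sub>0 nat"
  assumes "Poly_Mapping.lookup u \<le> Poly_Mapping.lookup (Poly_Mapping.single j 1 + w)" "finite L"
  shows "(\<Sum>l\<in>L. Poly_Mapping.lookup u l) \<le>
    (\<Sum>l\<in>L. Poly_Mapping.lookup w l) + (if j \<in> L then 1 else 0)"
proof -
  have "(\<Sum>l\<in>L. Poly_Mapping.lookup u l) \<le>
      (\<Sum>l\<in>L. Poly_Mapping.lookup (Poly_Mapping.single j 1 + w) l)"
    by (rule sum_mono) (rule le_funD[OF assms(1)])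
  also have "\<dots> = (\<Sum>l\<in>L. Poly_Mapping.lookup w l) + (if j \<in> L then 1 else 0)"
    using assms(2) by (simp add: lookup_add lookup_single when_def sum.distrib sum.delta)
  finally show ?thesis .
qed

text \<open>The pointwise largest sequence starting at \<open>0\<close> with increments at most \<open>c\<close> that stays
  below \<open>\<beta>\<close>.\<close>

primrec greedy_sums :: "(nat \<Rightarrow> nat) \<Rightarrow> (nat \<Rightarrow> nat) \<Rightarrow> nat \<Rightarrow> nat" where
  "greedy_sums \<beta> c 0 = 0"
| "greedy_sums \<beta> c (Suc i) = min (\<beta> (Suc i)) (greedy_sums \<beta> c i + c (Suc i))"

lemma greedy_sums_le_bound: "1 \<le> i \<Longrightarrow> greedy_sums \<beta> c i \<le> \<beta> i"
  by (cases i) auto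

lemma greedy_sums_mono:
  assumes "\<And>i. 1 \<le> i \<Longrightarrow> i < n \<Longrightarrow> \<beta> i \<le> \<beta> (i + 1)" "i < n"
  shows "greedy_sums \<beta> c i \<le> greedy_sums \<beta> c (Suc i)"
proof -
  have "greedy_sums \<beta> c i \<le> \<beta> (Suc i)"
  proof (cases "i = 0")
    case False
    then show ?thesis
      using greedy_sums_le_bound[of i \<beta> c] assms(1)[of i] assms(2) by simp
  qed simp
  then show ?thesis by simp
qed

lemma greedy_sums_lower_bound:
  assumes "L \<le> (\<Sum>l=1..i. c l)" "\<And>k. 1 \<le> k \<Longrightarrow> k \<le> i \<Longrightarrow> L \<le> \<beta> k + (\<Sum>l=k+1..i. c l)"
  shows "L \<le> greedy_sums \<beta> c i"
  using assms
proof (induction i arbitrary: L)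
  case (Suc i)
  have "L - c (Suc i) \<le> greedy_sums \<beta> c i"
  proof (rule Suc.IH)
    show "L - c (Suc i) \<le> (\<Sum>l=1..i. c l)" using Suc.prems(1) by simp
    show "L - c (Suc i) \<le> \<beta> k + (\<Sum>l=k+1..i. c l)" if "1 \<le> k" "k \<le> i" for k
      using Suc.prems(2)[of k] that by simp
  qed
  moreover have "L \<le> \<beta> (Suc i)" using Suc.prems(2)[of "Suc i"] by simp
  ultimately show ?case by simp
qed simp

definition exp_of_sums :: "nat \<Rightarrow> (nat \<Rightarrow> nat) \<Rightarrow> nat \<Rightarrow>\<^sub>0 nat" where
  "exp_of_sums n S = Abs_poly_mapping (\<lambda>l. if l \<in> {1..n} then S l - S (l - 1) else 0)"

lemma lookup_exp_of_sums:
  "Poly_Mapping.lookup (exp_of_sums n S) l = (if l \<in> {1..n} then S l - S (l - 1) else 0)"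
proof -
  have "finite {l. (if l \<in> {1..n} then S l - S (l - 1) else 0) \<noteq> 0}"
    by (rule finite_subset[of _ "{1..n}"]) auto
  then show ?thesis unfolding exp_of_sums_def by simp
qed

lemma keys_exp_of_sums: "Poly_Mapping.keys (exp_of_sums n S) \<subseteq> {1..n}"
  by (auto simp: in_keys_iff lookup_exp_of_sums split: if_splits)

lemma partial_sum_exp_of_sums:
  assumes "S 0 = 0" "\<And>l. l < n \<Longrightarrow> S l \<le> S (Suc l)" "i \<le> n"
  shows "partial_sum (exp_of_sums n S) i = S i"
  using assms(3)
proof (induction i)
  case (Suc i)
  then show ?case using assms(2)[of i] by (simp add: lookup_exp_of_sums)
qed (simp add: assms(1))

lemma exp_with_bounded_partial_sums:
  assumes \<beta>_mono: "\<And>i. 1 \<le> i \<Longrightarrow> i < n \<Longrightarrow> \<beta> i \<le> \<beta> (i + 1)"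
    and initial: "\<And>i. 1 \<le> i \<Longrightarrow> i \<le> n \<Longrightarrow> \<alpha> i \<le> (\<Sum>l=1..i. c l)"
    and after_k: "\<And>k i. 1 \<le> k \<Longrightarrow> k \<le> i \<Longrightarrow> i \<le> n \<Longrightarrow> \<alpha> i \<le> \<beta> k + (\<Sum>l=k+1..i. c l)"
  obtains u where "Poly_Mapping.keys u \<subseteq> {1..n}" "\<And>l. Poly_Mapping.lookup u l \<le> c l"
    "\<And>i. 1 \<le> i \<Longrightarrow> i \<le> n \<Longrightarrow> \<alpha> i \<le> partial_sum u i"
    "\<And>i. 1 \<le> i \<Longrightarrow> i \<le> n \<Longrightarrow> partial_sum u i \<le> \<beta> i"
proof
  let ?S = "greedy_sums \<beta> c"
  let ?u = "exp_of_sums n ?S"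
  have sums: "partial_sum ?u i = ?S i" if "i \<le> n" for i
    using greedy_sums_mono[of n \<beta>, OF \<beta>_mono] that by (intro partial_sum_exp_of_sums) auto
  show "Poly_Mapping.keys ?u \<subseteq> {1..n}" by (rule keys_exp_of_sums)
  show "Poly_Mapping.lookup ?u l \<le> c l" for l
    by (cases l) (auto simp: lookup_exp_of_sums)
  show "\<alpha> i \<le> partial_sum ?u i" if "1 \<le> i" "i \<le> n" for i
  proof -
    have "\<alpha> i \<le> ?S i" using that initial after_k by (intro greedy_sums_lower_bound) auto
    then show ?thesis using sums[of i] that by simp
  qed
  show "partial_sum ?u i \<le> \<beta> i" if "1 \<le> i" "i \<le> n" for i
    using sums[of i] greedy_sums_le_bound[of i \<beta> c] that by simp
qed

section \<open>Socle monomials of basic PLP-polymatroidal ideals\<close>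

definition plp_exps :: "nat \<Rightarrow> (nat \<Rightarrow> nat) \<Rightarrow> (nat \<Rightarrow> nat) \<Rightarrow> (nat \<Rightarrow> nat) \<Rightarrow> (nat \<Rightarrow>\<^sub>0 nat) set" where
  "plp_exps n b \<alpha> \<beta> = {u. Poly_Mapping.keys u \<subseteq> {1..n} \<and>
     (\<forall>i\<in>{1..n}. Poly_Mapping.lookup u i \<le> b i \<and> \<alpha> i \<le> partial_sum u i \<and> partial_sum u i \<le> \<beta> i)}"

lemma plp_ideal_eq_ideal_gen: "plp_ideal n b \<alpha> \<beta> = ideal_gen n (monom ` plp_exps n b \<alpha> \<beta>)"
  unfolding plp_ideal_def plp_exps_def by (simp only: setcompr_eq_image)

definition plp_socle_profile ::
  "nat \<Rightarrow> (nat \<Rightarrow> nat) \<Rightarrow> (nat \<Rightarrow> nat) \<Rightarrow> (nat \<Rightarrow> nat) \<Rightarrow> (nat \<Rightarrow>\<^sub>0 nat) \<Rightarrow> bool" where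
  "plp_socle_profile n b \<alpha> \<beta> w \<longleftrightarrow> Poly_Mapping.keys w \<subseteq> {1..n} \<and>
     (\<forall>l\<in>{1..n}. Poly_Mapping.lookup w l < b l) \<and>
     (\<forall>i. 1 \<le> i \<and> i < n \<longrightarrow> \<alpha> i \<le> partial_sum w i \<and> partial_sum w i < \<beta> i) \<and>
     partial_sum w n + 1 = \<beta> n"

definition plp_depth_zero_conditions ::
  "nat \<Rightarrow> nat \<Rightarrow> (nat \<Rightarrow> nat) \<Rightarrow> (nat \<Rightarrow> nat) \<Rightarrow> (nat \<Rightarrow> nat) \<Rightarrow> bool" where
  "plp_depth_zero_conditions n d b \<alpha> \<beta> \<longleftrightarrow>
     (\<forall>i\<in>{1..n}. b i \<ge> 1) \<and>
     (\<forall>i. 2 \<le> i \<and> i \<le> n - 1 \<longrightarrow> \<alpha> i + 1 \<le> \<beta> i) \<and>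
     (\<forall>i j. 1 \<le> i \<and> i \<le> j \<and> j \<le> n - 1 \<longrightarrow>
        \<beta> i + (\<Sum>k=i+1..j. b k) \<ge> \<alpha> j + j - i + 1) \<and>
     (\<forall>i\<in>{1..n}. \<beta> i + (\<Sum>k=i+1..n. b k) \<ge> d + n - i)"

context
  fixes n d :: nat and b \<alpha> \<beta> :: "nat \<Rightarrow> nat"
  assumes n_pos: "1 \<le> n"
    and \<beta>_mono: "\<And>i. 1 \<le> i \<Longrightarrow> i < n \<Longrightarrow> \<beta> i \<le> \<beta> (i + 1)"
    and \<alpha>_top: "\<alpha> n = d" and \<beta>_top: "\<beta> n = d"
begin

lemma plp_socle_exp_lookup_less:
  assumes "socle_exp n (plp_exps n b \<alpha> \<beta>) w" "l \<in> {1..n}"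
  shows "Poly_Mapping.lookup w l < b l"
proof -
  obtain u where "u \<in> plp_exps n b \<alpha> \<beta>" "Poly_Mapping.lookup u l = Poly_Mapping.lookup w l + 1"
    using socle_exp_witness[OF assms] by blast
  moreover have "Poly_Mapping.lookup u l \<le> b l"
    using calculation(1) assms(2) unfolding plp_exps_def by blast
  ultimately show ?thesis by simp
qed

lemma plp_socle_exp_alpha_bound:
  assumes "socle_exp n (plp_exps n b \<alpha> \<beta>) w" "1 \<le> k" "k \<le> i" "i \<le> n"
  shows "\<alpha> i \<le> \<beta> k + (\<Sum>l=k+1..i. Poly_Mapping.lookup w l)"
proof -
  obtain u where u: "u \<in> plp_exps n b \<alpha> \<beta>"
      "Poly_Mapping.lookup u \<le> Poly_Mapping.lookup (Poly_Mapping.single k 1 + w)"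
    using socle_exp_witness[OF assms(1), of k] assms(2-4) by auto
  have "\<alpha> i \<le> partial_sum u i" using u(1) assms(2-4) by (auto simp: plp_exps_def)
  also have "\<dots> = partial_sum u k + (\<Sum>l=k+1..i. Poly_Mapping.lookup u l)"
    using assms(2,3) by (intro sum_atLeastAtMost_split) auto
  also have "\<dots> \<le> \<beta> k + (\<Sum>l=k+1..i. Poly_Mapping.lookup w l)"
    using u(1) assms(2-4) sum_lookup_le_add_single[OF u(2), of "{k+1..i}"]
    by (intro add_mono) (auto simp: plp_exps_def)
  finally show ?thesis .
qed

lemma plp_socle_exp_alpha_le_partial_sum:
  assumes "socle_exp n (plp_exps n b \<alpha> \<beta>) w" "1 \<le> i" "i < n"
  shows "\<alpha> i \<le> partial_sum w i"
proof -
  obtain u where u: "u \<in> plp_exps n b \<alpha> \<beta>"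
      "Poly_Mapping.lookup u \<le> Poly_Mapping.lookup (Poly_Mapping.single n 1 + w)"
    using socle_exp_witness[OF assms(1), of n] n_pos by auto
  have "\<alpha> i \<le> partial_sum u i" using u(1) assms(2,3) by (auto simp: plp_exps_def)
  also have "\<dots> \<le> partial_sum w i"
    using sum_lookup_le_add_single[OF u(2), of "{1..i}"] assms(3) by simp
  finally show ?thesis .
qed

lemma plp_socle_exp_degree:
  assumes socle: "socle_exp n (plp_exps n b \<alpha> \<beta>) w"
  shows "partial_sum w n + 1 = d"
proof -
  obtain u where u: "u \<in> plp_exps n b \<alpha> \<beta>"
      "Poly_Mapping.lookup u \<le> Poly_Mapping.lookup (Poly_Mapping.single 1 1 + w)"
    using socle_exp_witness[OF socle, of 1] n_pos by auto
  have "d \<le> partial_sum u n" using u(1) n_pos \<alpha>_top by (auto simp: plp_exps_def)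
  also have "\<dots> \<le> partial_sum w n + 1"
    using sum_lookup_le_add_single[OF u(2), of "{1..n}"] n_pos by simp
  finally have "d \<le> partial_sum w n + 1" .
  moreover have "partial_sum w n < d"
  \<comment> \<open>otherwise the greedy construction yields a generator dividing \<open>x\<^sup>w\<close>\<close>
  proof (rule ccontr)
    assume "\<not> partial_sum w n < d"
    then have initial: "\<alpha> i \<le> partial_sum w i" if "1 \<le> i" "i \<le> n" for i
      using plp_socle_exp_alpha_le_partial_sum[OF socle, of i] that \<alpha>_top by (cases "i = n") auto
    obtain v where v: "Poly_Mapping.keys v \<subseteq> {1..n}"
        "\<And>l. Poly_Mapping.lookup v l \<le> Poly_Mapping.lookup w l"
        "\<And>i. 1 \<le> i \<Longrightarrow> i \<le> n \<Longrightarrow> \<alpha> i \<le> partial_sum v i"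
        "\<And>i. 1 \<le> i \<Longrightarrow> i \<le> n \<Longrightarrow> partial_sum v i \<le> \<beta> i"
      using exp_with_bounded_partial_sums[of n \<beta> \<alpha> "Poly_Mapping.lookup w"]
        \<beta>_mono initial plp_socle_exp_alpha_bound[OF socle] by blast
    have "Poly_Mapping.lookup v l \<le> b l" if "l \<in> {1..n}" for l
      using v(2)[of l] plp_socle_exp_lookup_less[OF socle that] by simp
    then have "v \<in> plp_exps n b \<alpha> \<beta>"
      using v(1,3,4) by (simp add: plp_exps_def)
    then have "w \<in> upset (plp_exps n b \<alpha> \<beta>)"
      using v(2) unfolding upset_def le_fun_def by blast
    then show False using socle by (simp add: socle_exp_def)
  qed
  ultimately show ?thesis by simp
qed

lemma plp_socle_exp_partial_sum_less:
  assumes socle: "socle_exp n (plp_exps n b \<alpha> \<beta>) w" and i: "1 \<le> i" "i < n"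
  shows "partial_sum w i < \<beta> i"
proof -
  have "d \<le> \<beta> i + (\<Sum>l=i+1..n. Poly_Mapping.lookup w l)"
    using plp_socle_exp_alpha_bound[OF socle i(1), of n] i \<alpha>_top by simp
  moreover have "partial_sum w n = partial_sum w i + (\<Sum>l=i+1..n. Poly_Mapping.lookup w l)"
    using i by (intro sum_atLeastAtMost_split) auto
  ultimately show ?thesis using plp_socle_exp_degree[OF socle] by simp
qed

lemma plp_socle_profile_imp_socle_exp:
  assumes profile: "plp_socle_profile n b \<alpha> \<beta> w"
  shows "socle_exp n (plp_exps n b \<alpha> \<beta>) w"
proof -
  have w: "Poly_Mapping.keys w \<subseteq> {1..n}" "\<And>l. l \<in> {1..n} \<Longrightarrow> Poly_Mapping.lookup w l < b l"
      "\<And>i. 1 \<le> i \<Longrightarrow> i < n \<Longrightarrow> \<alpha> i \<le> partial_sum w i \<and> partial_sum w i < \<beta> i"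
      "partial_sum w n + 1 = d"
    using profile \<beta>_top by (auto simp: plp_socle_profile_def)
  have "w \<notin> upset (plp_exps n b \<alpha> \<beta>)"
  proof
    assume "w \<in> upset (plp_exps n b \<alpha> \<beta>)"
    then obtain u where u: "u \<in> plp_exps n b \<alpha> \<beta>" "Poly_Mapping.lookup u \<le> Poly_Mapping.lookup w"
      unfolding upset_def by blast
    have "d \<le> partial_sum u n" using u(1) n_pos \<alpha>_top by (auto simp: plp_exps_def)
    also have "\<dots> \<le> partial_sum w n" using u(2) by (intro sum_mono) (simp add: le_fun_def)
    finally show False using w(4) by simp
  qed
  moreover have "Poly_Mapping.single j 1 + w \<in> plp_exps n b \<alpha> \<beta>" if j: "j \<in> {1..n}" for j
  proof -
    have sums: "partial_sum (Poly_Mapping.single j 1 + w) i =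
        partial_sum w i + (if j \<le> i then 1 else 0)" for i
      using j by (simp add: lookup_add lookup_single when_def sum.distrib sum.delta)
    show ?thesis
      unfolding plp_exps_def mem_Collect_eq
    proof (intro conjI ballI)
      show "Poly_Mapping.keys (Poly_Mapping.single j 1 + w) \<subseteq> {1..n}"
        using keys_add[of "Poly_Mapping.single j 1" w] w(1) j by auto
      fix i assume i: "i \<in> {1..n}"
      show "Poly_Mapping.lookup (Poly_Mapping.single j 1 + w) i \<le> b i"
        using w(2)[OF i] by (simp add: lookup_add lookup_single when_def)
      show "\<alpha> i \<le> partial_sum (Poly_Mapping.single j 1 + w) i"
        using w(3)[of i] w(4) i j \<alpha>_top sums[of i] by (cases "i < n") simp_all
      show "partial_sum (Poly_Mapping.single j 1 + w) i \<le> \<beta> i"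
        using w(3)[of i] w(4) i j \<beta>_top sums[of i] by (cases "i < n") simp_all
    qed
  qed
  ultimately show ?thesis using w(1) by (auto simp: socle_exp_def upset_def)
qed

lemma socle_exp_plp_iff:
  "socle_exp n (plp_exps n b \<alpha> \<beta>) w \<longleftrightarrow> plp_socle_profile n b \<alpha> \<beta> w"
proof
  assume socle: "socle_exp n (plp_exps n b \<alpha> \<beta>) w"
  then show "plp_socle_profile n b \<alpha> \<beta> w"
    unfolding plp_socle_profile_def
    using plp_socle_exp_lookup_less plp_socle_exp_alpha_le_partial_sum
      plp_socle_exp_partial_sum_less plp_socle_exp_degree \<beta>_top
    by (simp add: socle_exp_def)
qed (rule plp_socle_profile_imp_socle_exp)

lemma plp_socle_profile_imp_conditions:
  assumes "plp_socle_profile n b \<alpha> \<beta> w"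
  shows "plp_depth_zero_conditions n d b \<alpha> \<beta>"
proof -
  let ?W = "partial_sum w"
  have w: "\<And>l. l \<in> {1..n} \<Longrightarrow> Poly_Mapping.lookup w l < b l"
      "\<And>i. 1 \<le> i \<Longrightarrow> i < n \<Longrightarrow> \<alpha> i \<le> ?W i \<and> ?W i < \<beta> i" "?W n + 1 = d"
    using assms \<beta>_top by (auto simp: plp_socle_profile_def)
  have split: "?W j = ?W i + (\<Sum>l=i+1..j. Poly_Mapping.lookup w l)" if "i \<le> j" for i j
    using that by (intro sum_atLeastAtMost_split) auto
  have slack: "(\<Sum>l=i+1..j. Poly_Mapping.lookup w l) + (j - i) \<le> (\<Sum>l=i+1..j. b l)"
    if ij: "1 \<le> i" "j \<le> n" for i j
  proof -
    have w_lt_b: "Poly_Mapping.lookup w l < b l" if "l \<in> {i+1..j}" for l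
      using w(1) that ij by simp
    have "Poly_Mapping.lookup w l \<le> b l - 1" if "l \<in> {i+1..j}" for l
      using w_lt_b[OF that] by simp
    then have "(\<Sum>l=i+1..j. Poly_Mapping.lookup w l) \<le> (\<Sum>l=i+1..j. b l - 1)"
      by (rule sum_mono)
    moreover have "(\<Sum>l=i+1..j. b l - 1) + (j - i) = (\<Sum>l=i+1..j. b l)"
      using sum_minus_one_add_card[of "{i+1..j}" b] w_lt_b by fastforce
    ultimately show ?thesis by linarith
  qed
  show ?thesis
    unfolding plp_depth_zero_conditions_def
  proof (intro conjI allI ballI impI)
    show "1 \<le> b i" if "i \<in> {1..n}" for i
      using w(1)[OF that] by simp
    show "\<alpha> i + 1 \<le> \<beta> i" if "2 \<le> i \<and> i \<le> n - 1" for i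
    proof -
      have "1 \<le> i" "i < n" using that by auto
      then show ?thesis using w(2)[of i] by auto
    qed
    show "\<alpha> j + j - i + 1 \<le> \<beta> i + (\<Sum>k=i+1..j. b k)" if ij: "1 \<le> i \<and> i \<le> j \<and> j \<le> n - 1" for i j
    proof -
      have "1 \<le> i" "i \<le> j" "j < n" using ij by auto
      then have "\<alpha> j \<le> ?W i + (\<Sum>l=i+1..j. Poly_Mapping.lookup w l)" "?W i + 1 \<le> \<beta> i"
        using w(2)[of i] w(2)[of j] split[of i j] by auto
      then show ?thesis using slack[of i j] ij by linarith
    qed
    show "d + n - i \<le> \<beta> i + (\<Sum>k=i+1..n. b k)" if i: "i \<in> {1..n}" for i
    proof (cases "i = n")
      case False
      then have "d = ?W i + (\<Sum>l=i+1..n. Poly_Mapping.lookup w l) + 1" "?W i + 1 \<le> \<beta> i"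
        using w(2)[of i] w(3) split[of i n] i by auto
      moreover have "1 \<le> i" "i \<le> n" using i by auto
      ultimately show ?thesis using slack[of i n] by linarith
    qed (simp add: \<beta>_top)
  qed
qed

lemma plp_conditions_shifted:
  assumes "plp_depth_zero_conditions n d b \<alpha> \<beta>"
  shows "\<And>k i. 1 \<le> k \<Longrightarrow> k \<le> i \<Longrightarrow> i < n \<Longrightarrow> \<alpha> i \<le> \<beta> k - 1 + (\<Sum>l=k+1..i. b l - 1)"
    and "\<And>k. 1 \<le> k \<Longrightarrow> k < n \<Longrightarrow> d - 1 \<le> \<beta> k - 1 + (\<Sum>l=k+1..n. b l - 1)"
    and "\<And>i. 1 \<le> i \<Longrightarrow> i < n \<Longrightarrow> \<alpha> i < \<beta> i"
proof -
  have slack: "(\<Sum>l=k+1..i. b l - 1) + (i - k) = (\<Sum>l=k+1..i. b l)" if "1 \<le> k" "i \<le> n" for k i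
    using assms that sum_minus_one_add_card[of "{k+1..i}" b]
    by (simp add: plp_depth_zero_conditions_def)
  show "\<alpha> i \<le> \<beta> k - 1 + (\<Sum>l=k+1..i. b l - 1)" if "1 \<le> k" "k \<le> i" "i < n" for k i
  proof -
    have "\<alpha> i + (i - k) + 1 \<le> \<beta> k + (\<Sum>l=k+1..i. b l)"
      using assms that unfolding plp_depth_zero_conditions_def by fastforce
    then show ?thesis using slack[of k i] that by linarith
  qed
  show "d - 1 \<le> \<beta> k - 1 + (\<Sum>l=k+1..n. b l - 1)" if "1 \<le> k" "k < n" for k
  proof -
    have "d + (n - k) \<le> \<beta> k + (\<Sum>l=k+1..n. b l)"
      using assms that unfolding plp_depth_zero_conditions_def by fastforce
    then show ?thesis using slack[of k n] that by linarith
  qed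
  show "\<alpha> i < \<beta> i" if "1 \<le> i" "i < n" for i
  proof -
    have "\<alpha> i + (i - i) + 1 \<le> \<beta> i + (\<Sum>l=i+1..i. b l)"
      using assms that unfolding plp_depth_zero_conditions_def by fastforce
    then show ?thesis by simp
  qed
qed

lemma plp_conditions_nontrivial:
  assumes "plp_depth_zero_conditions n d b \<alpha> \<beta>" "\<alpha> 1 = 0" "\<beta> 1 = b 1"
  shows "2 \<le> n" "1 \<le> d"
proof -
  show "2 \<le> n"
  proof (rule ccontr)
    assume "\<not> 2 \<le> n"
    then have "n = 1" using n_pos by simp
    then show False using assms \<alpha>_top \<beta>_top by (simp add: plp_depth_zero_conditions_def)
  qed
  then have "\<alpha> (n - 1) < \<beta> (n - 1)" "\<beta> (n - 1) \<le> \<beta> n"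
    using plp_conditions_shifted(3)[OF assms(1), of "n - 1"] \<beta>_mono[of "n - 1"] by simp_all
  then show "1 \<le> d" using \<beta>_top by simp
qed

lemma plp_socle_profile_exists:
  assumes conds: "plp_depth_zero_conditions n d b \<alpha> \<beta>" and "\<alpha> 1 = 0" and \<beta>_1: "\<beta> 1 = b 1"
  shows "\<exists>w. plp_socle_profile n b \<alpha> \<beta> w"
proof -
  have n2: "2 \<le> n" and d_pos: "1 \<le> d" using plp_conditions_nontrivial assms by blast+
  define \<alpha>' where "\<alpha>' i = (if i < n then \<alpha> i else d - 1)" for i
  define \<beta>' where "\<beta>' i = (if i < n then \<beta> i - 1 else d - 1)" for i
  have after_k: "\<alpha>' i \<le> \<beta>' k + (\<Sum>l=k+1..i. b l - 1)" if "1 \<le> k" "k \<le> i" "i \<le> n" for k i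
    using plp_conditions_shifted(1,2)[OF conds] that by (auto simp: \<alpha>'_def \<beta>'_def)
  have initial: "\<alpha>' i \<le> (\<Sum>l=1..i. b l - 1)" if "1 \<le> i" "i \<le> n" for i
    using after_k[of 1 i] sum_atLeastAtMost_split[of 1 1 i "\<lambda>l. b l - 1"] that n2 \<beta>_1
    by (simp add: \<beta>'_def)
  have "\<beta>' i \<le> \<beta>' (i + 1)" if "1 \<le> i" "i < n" for i
  proof (cases "i + 1 < n")
    case True
    then show ?thesis using \<beta>_mono[OF that] by (simp add: \<beta>'_def diff_le_mono)
  next
    case False
    then have "i + 1 = n" using that by simp
    then show ?thesis
      using \<beta>_mono[OF that, unfolded \<open>i + 1 = n\<close>] \<beta>_top False that
      by (simp add: \<beta>'_def diff_le_mono)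
  qed
  then obtain w where w: "Poly_Mapping.keys w \<subseteq> {1..n}" "\<And>l. Poly_Mapping.lookup w l \<le> b l - 1"
      "\<And>i. 1 \<le> i \<Longrightarrow> i \<le> n \<Longrightarrow> \<alpha>' i \<le> partial_sum w i"
      "\<And>i. 1 \<le> i \<Longrightarrow> i \<le> n \<Longrightarrow> partial_sum w i \<le> \<beta>' i"
    using exp_with_bounded_partial_sums[of n \<beta>' \<alpha>' "\<lambda>l. b l - 1"] initial after_k by blast
  have "plp_socle_profile n b \<alpha> \<beta> w"
    unfolding plp_socle_profile_def
  proof (intro conjI allI impI ballI)
    show "Poly_Mapping.keys w \<subseteq> {1..n}" by (rule w(1))
    show "Poly_Mapping.lookup w l < b l" if "l \<in> {1..n}" for l
    proof -
      have "1 \<le> b l" using conds that unfolding plp_depth_zero_conditions_def by blast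
      then show ?thesis using w(2)[of l] by simp
    qed
    show "\<alpha> i \<le> partial_sum w i" "partial_sum w i < \<beta> i" if "1 \<le> i \<and> i < n" for i
      using w(3)[of i] w(4)[of i] plp_conditions_shifted(3)[OF conds, of i] that
      by (auto simp: \<alpha>'_def \<beta>'_def)
    show "partial_sum w n + 1 = \<beta> n"
      using w(3)[of n] w(4)[of n] n_pos d_pos \<beta>_top by (simp add: \<alpha>'_def \<beta>'_def)
  qed
  then show ?thesis ..
qed

lemma plp_socle_profile_exists_iff:
  assumes "\<alpha> 1 = 0" "\<beta> 1 = b 1"
  shows "(\<exists>w. plp_socle_profile n b \<alpha> \<beta> w) \<longleftrightarrow> plp_depth_zero_conditions n d b \<alpha> \<beta>"
  using plp_socle_profile_imp_conditions plp_socle_profile_exists[OF _ assms] by blast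

end

theorem corollary3p4:
  fixes n d :: nat and b \<alpha> \<beta> :: "nat \<Rightarrow> nat"
  assumes "n \<ge> 1"
    and "\<And>i. 1 \<le> i \<Longrightarrow> i < n \<Longrightarrow> \<alpha> i \<le> \<alpha> (i + 1)"
    and "\<And>i. 1 \<le> i \<Longrightarrow> i < n \<Longrightarrow> \<beta> i \<le> \<beta> (i + 1)"
    and "\<alpha> n = d" and "\<beta> n = d"
    and "\<And>i. 1 \<le> i \<Longrightarrow> i \<le> n \<Longrightarrow> \<alpha> i \<le> \<beta> i"
    and "\<alpha> 1 = 0" and "\<beta> 1 = b 1"
  shows "depth_zero n (plp_ideal n b \<alpha> \<beta> :: 'k::field mpoly set) \<longleftrightarrow>
     (\<forall>i\<in>{1..n}. b i \<ge> 1) \<and>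
     (\<forall>i. 2 \<le> i \<and> i \<le> n - 1 \<longrightarrow> \<alpha> i + 1 \<le> \<beta> i) \<and>
     (\<forall>i j. 1 \<le> i \<and> i \<le> j \<and> j \<le> n - 1 \<longrightarrow>
        \<beta> i + (\<Sum>k=i+1..j. b k) \<ge> \<alpha> j + j - i + 1) \<and>
     (\<forall>i\<in>{1..n}. \<beta> i + (\<Sum>k=i+1..n. b k) \<ge> d + n - i)"
proof -
  have "Poly_Mapping.keys u \<subseteq> {1..n}" if "u \<in> plp_exps n b \<alpha> \<beta>" for u
    using that by (simp add: plp_exps_def)
  then have "depth_zero n (plp_ideal n b \<alpha> \<beta> :: 'k mpoly set) \<longleftrightarrow>
      (\<exists>w. socle_exp n (plp_exps n b \<alpha> \<beta>) w)"
    unfolding plp_ideal_eq_ideal_gen by (rule depth_zero_ideal_gen_monom_iff)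
  also have "\<dots> \<longleftrightarrow> (\<exists>w. plp_socle_profile n b \<alpha> \<beta> w)"
    by (intro ex_cong1 socle_exp_plp_iff) (use assms in auto)
  also have "\<dots> \<longleftrightarrow> plp_depth_zero_conditions n d b \<alpha> \<beta>"
    by (rule plp_socle_profile_exists_iff) (use assms in auto)
  finally show ?thesis unfolding plp_depth_zero_conditions_def .
qed

end
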